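(* For every prime power $q\ge 5$, $\chi_D(LG_q)=3$.
   Context: Let $\mathbb{F}_q$ be the field with $q$ elements and $V=\mathbb{F}_q^3$. Let $\mathcal{P}$ be the set of $1$-dimensional subspaces ("points") and $\mathcal{L}$ the set of $2$-dimensional subspaces ("lines") of $V$. The Levi graph $LG_q$ is the bipartite graph with vertex set $\mathcal{P}\sqcup\mathcal{L}$ in which a point $p$ is adjacent to a line $l$ iff $p\subset l$. A coloring is distinguishing if the only graph automorphism mapping every color class onto itself is the identity; $\chi_D(G)$ is the minimum number of colors of a proper distinguishing coloring of $G$. *)

theory Defs
  imports "HOL-Analysis.Analysis"
begin

definition graph_aut :: "'v set \<Rightarrow> ('v \<Rightarrow> 'v \<Rightarrow> bool) \<Rightarrow> ('v \<Rightarrow> 'v) \<Rightarrow> bool" where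
  "graph_aut V E \<sigma> \<longleftrightarrow> bij_betw \<sigma> V V \<and> (\<forall>u\<in>V. \<forall>v\<in>V. E u v \<longleftrightarrow> E (\<sigma> u) (\<sigma> v))"

definition proper_coloring :: "'v set \<Rightarrow> ('v \<Rightarrow> 'v \<Rightarrow> bool) \<Rightarrow> ('v \<Rightarrow> nat) \<Rightarrow> bool" where
  "proper_coloring V E c \<longleftrightarrow> (\<forall>u\<in>V. \<forall>v\<in>V. E u v \<longrightarrow> c u \<noteq> c v)"

definition distinguishing :: "'v set \<Rightarrow> ('v \<Rightarrow> 'v \<Rightarrow> bool) \<Rightarrow> ('v \<Rightarrow> nat) \<Rightarrow> bool" where
  "distinguishing V E c \<longleftrightarrow>
     (\<forall>\<sigma>. graph_aut V E \<sigma> \<and> (\<forall>i. \<sigma> ` {v\<in>V. c v = i} = {v\<in>V. c v = i})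
          \<longrightarrow> (\<forall>v\<in>V. \<sigma> v = v))"

definition dist_chromatic_number :: "'v set \<Rightarrow> ('v \<Rightarrow> 'v \<Rightarrow> bool) \<Rightarrow> nat" where
  "dist_chromatic_number V E =
     (LEAST k. \<exists>c. c ` V \<subseteq> {..<k} \<and> proper_coloring V E c \<and> distinguishing V E c)"

definition pg_points :: "('a::field ^ 3) set set" where
  "pg_points = {S. vec.subspace S \<and> vec.dim S = 1}"

definition pg_lines :: "('a::field ^ 3) set set" where
  "pg_lines = {S. vec.subspace S \<and> vec.dim S = 2}"

text \<open>Vertices are the subspaces themselves; points and lines are disjoint since their
  dimensions differ.\<close>
definition levi_vertices :: "('a::field ^ 3) set set" where
  "levi_vertices = pg_points \<union> pg_lines"

definition levi_adj :: "('a::field ^ 3) set \<Rightarrow> ('a ^ 3) set \<Rightarrow> bool" where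
  "levi_adj S T \<longleftrightarrow> (S \<in> pg_points \<and> T \<in> pg_lines \<and> S \<subseteq> T)
                   \<or> (T \<in> pg_points \<and> S \<in> pg_lines \<and> T \<subseteq> S)"

end

theory Submission
  imports Defs
begin

text \<open>Two colours do not suffice: any two points have a common neighbour (their join) and so do
  any two lines (their meet), so a proper 2-colouring is constant on points and on lines and is
  preserved by every collineation, for instance the one exchanging the first two coordinates.

  Three colours suffice: colour points 0 and lines 1, except for a set of marked affine points
  and the two marked lines \<open>line_inf\<close> and \<open>Y = y\<^sub>0\<close>, which get colour 2. Every marked point
  lies on an unmarked line, so an automorphism preserving the colour classes maps points to
  points and is a collineation preserving the marked points and lines. It fixes the point
  \<open>hinf\<close> where the two marked lines meet, hence permutes the horizontal lines; these carry
  pairwise different numbers of marked points, so each is fixed. The marked points in rows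
  1 to 4 then force two vertical lines to be fixed, and a collineation fixing all horizontal
  lines and two vertical ones is the identity.\<close>

section \<open>The projective plane over a field\<close>

lemma mem_span_pair:
  fixes u w x :: "'a::field ^ 'n"
  shows "x \<in> vec.span {u, w} \<longleftrightarrow> (\<exists>s t. x = s *s u + t *s w)"
proof -
  have "x \<in> vec.span {u, w} \<longleftrightarrow> (\<exists>s. x - s *s u \<in> range (\<lambda>t. t *s w))"
    using vec.span_breakdown_eq[of x u "{w}"] unfolding vec.span_singleton by simp
  also have "\<dots> \<longleftrightarrow> (\<exists>s t. x = s *s u + t *s w)"
    by (metis (no_types, lifting) add_diff_cancel_left' diff_add_cancel rangeE rangeI)
  finally show ?thesis .
qed

lemma span_singleton_subset_iff:
  fixes L :: "('a::field ^ 'n) set"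
  assumes "vec.subspace L"
  shows "vec.span {v} \<subseteq> L \<longleftrightarrow> v \<in> L"
  using assms vec.span_minimal vec.span_base by blast

lemma subspace_subset_sums:
  fixes S T :: "('a::field ^ 'n) set"
  assumes "vec.subspace S" "vec.subspace T"
  shows "S \<subseteq> {x + y |x y. x \<in> S \<and> y \<in> T}" "T \<subseteq> {x + y |x y. x \<in> S \<and> y \<in> T}"
  using vec.subspace_0[OF assms(2)] vec.subspace_0[OF assms(1)] by force+

lemma pg_points_subspace: "p \<in> pg_points \<Longrightarrow> vec.subspace p \<and> vec.dim p = 1"
  and pg_lines_subspace: "l \<in> pg_lines \<Longrightarrow> vec.subspace l \<and> vec.dim l = 2"
  by (simp_all add: pg_points_def pg_lines_def)

lemma pg_point_not_line: "p \<in> pg_points \<Longrightarrow> p \<notin> pg_lines"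
  unfolding pg_points_def pg_lines_def by auto

lemma span_singleton_in_pg_points:
  fixes v :: "'a::field ^ 3"
  assumes "v \<noteq> 0"
  shows "vec.span {v} \<in> pg_points"
  using assms unfolding pg_points_def by simp

lemma span_pair_in_pg_lines:
  fixes u w :: "'a::field ^ 3"
  assumes "w \<noteq> 0" "\<And>k. u \<noteq> k *s w"
  shows "vec.span {u, w} \<in> pg_lines"
proof -
  have "u \<notin> vec.span {w}" "u \<noteq> w"
    using assms(2) assms(2)[of 1] unfolding vec.span_singleton by auto
  then have "vec.independent {u, w}"
    using assms(1) by (simp add: vec.independent_insert)
  then show ?thesis
    using \<open>u \<noteq> w\<close> unfolding pg_lines_def by (simp add: vec.dim_eq_card_independent)
qed

lemma pg_points_subset_eq: "p \<in> pg_points \<Longrightarrow> p' \<in> pg_points \<Longrightarrow> p \<subseteq> p' \<Longrightarrow> p = p'"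
  and pg_lines_subset_eq: "l \<in> pg_lines \<Longrightarrow> l' \<in> pg_lines \<Longrightarrow> l \<subseteq> l' \<Longrightarrow> l = l'"
  by (simp_all add: pg_points_def pg_lines_def vec.subspace_dim_equal)

lemma pg_pointE:
  assumes "p \<in> pg_points"
  obtains v where "v \<noteq> 0" "p = vec.span {v}"
proof -
  have p: "vec.subspace p" "vec.dim p = 1" using pg_points_subspace[OF assms] by auto
  obtain B where B: "B \<subseteq> p" "vec.independent B" "p \<subseteq> vec.span B" "card B = 1"
    using vec.basis_exists[of p] p(2) by metis
  then obtain v where v: "B = {v}" using card_1_singletonE by metis
  have "v \<noteq> 0" using B(2) v vec.dependent_zero by blast
  moreover have "vec.span {v} \<subseteq> p" using B(1) v span_singleton_subset_iff[OF p(1)] by simp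
  ultimately show ?thesis using that B(3) v by blast
qed

lemma pg_line_two_points:
  assumes "l \<in> pg_lines"
  obtains p p' where "p \<in> pg_points" "p' \<in> pg_points" "p \<noteq> p'" "p \<subseteq> l" "p' \<subseteq> l"
proof -
  have l: "vec.subspace l" "vec.dim l = 2" using pg_lines_subspace[OF assms] by auto
  obtain B where B: "B \<subseteq> l" "vec.independent B" "card B = 2"
    using vec.basis_exists[of l] l(2) by metis
  then obtain u w where uw: "B = {u, w}" "u \<noteq> w" using card_2_iff by metis
  have "u \<noteq> 0" "w \<noteq> 0" using B(2) uw vec.dependent_zero by blast+
  moreover have "vec.span {u} \<noteq> vec.span {w}"
  proof
    assume "vec.span {u} = vec.span {w}"
    then have "u \<in> vec.span {w}" using vec.span_base by blast
    then show False using B(2) uw by (simp add: vec.independent_insert)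
  qed
  moreover have "vec.span {u} \<subseteq> l" "vec.span {w} \<subseteq> l"
    using B(1) uw l(1) span_singleton_subset_iff by auto
  ultimately show ?thesis using that span_singleton_in_pg_points by metis
qed

lemma pg_points_sum_in_pg_lines:
  assumes "p \<in> pg_points" "p' \<in> pg_points" "p \<noteq> p'"
  shows "{x + y |x y. x \<in> p \<and> y \<in> p'} \<in> pg_lines"
proof -
  have p: "vec.subspace p" "vec.dim p = 1" "vec.subspace p'" "vec.dim p' = 1"
    using assms pg_points_subspace by auto
  have "vec.dim (p \<inter> p') = 0"
  proof (rule ccontr)
    assume "vec.dim (p \<inter> p') \<noteq> 0"
    moreover have "vec.dim (p \<inter> p') \<le> 1" using vec.dim_subset[of "p \<inter> p'" p] p by simp
    ultimately have "vec.dim (p \<inter> p') = 1" by linarith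
    then have "p \<inter> p' = p" "p \<inter> p' = p'"
      using vec.subspace_dim_equal[of "p \<inter> p'" p] vec.subspace_dim_equal[of "p \<inter> p'" p']
        vec.subspace_inter[OF p(1) p(3)] p by auto
    then show False using assms(3) by simp
  qed
  then have "vec.dim {x + y |x y. x \<in> p \<and> y \<in> p'} = 2"
    using vec.dim_sums_Int[OF p(1) p(3)] p by linarith
  then show ?thesis using vec.subspace_sums[OF p(1) p(3)] unfolding pg_lines_def by blast
qed

lemma pg_join_exists:
  assumes "p \<in> pg_points" "p' \<in> pg_points" "p \<noteq> p'"
  shows "\<exists>l\<in>pg_lines. p \<subseteq> l \<and> p' \<subseteq> l"
proof -
  have "p \<subseteq> {x + y |x y. x \<in> p \<and> y \<in> p'}" "p' \<subseteq> {x + y |x y. x \<in> p \<and> y \<in> p'}"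
    using subspace_subset_sums pg_points_subspace[OF assms(1)] pg_points_subspace[OF assms(2)]
    by blast+
  then show ?thesis using pg_points_sum_in_pg_lines[OF assms] by blast
qed

lemma pg_join_unique:
  assumes "p \<in> pg_points" "p' \<in> pg_points" "p \<noteq> p'"
    and "l \<in> pg_lines" "l' \<in> pg_lines" "p \<subseteq> l" "p' \<subseteq> l" "p \<subseteq> l'" "p' \<subseteq> l'"
  shows "l = l'"
proof -
  let ?S = "{x + y |x y. x \<in> p \<and> y \<in> p'}"
  have "?S \<subseteq> l" using assms(6,7) pg_lines_subspace[OF assms(4)] vec.subspace_add by blast
  moreover have "?S \<subseteq> l'" using assms(8,9) pg_lines_subspace[OF assms(5)] vec.subspace_add by blast
  ultimately have "?S = l" "?S = l'"
    using pg_lines_subset_eq[OF pg_points_sum_in_pg_lines[OF assms(1-3)]] assms(4,5) by blast+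
  then show ?thesis by simp
qed

lemma pg_meet_in_pg_points:
  assumes "l \<in> pg_lines" "l' \<in> pg_lines" "l \<noteq> l'"
  shows "l \<inter> l' \<in> pg_points"
proof -
  let ?S = "{x + y |x y. x \<in> l \<and> y \<in> l'}"
  have l: "vec.subspace l" "vec.dim l = 2" "vec.subspace l'" "vec.dim l' = 2"
    using assms pg_lines_subspace by auto
  have S: "vec.subspace ?S" "l \<subseteq> ?S" "l' \<subseteq> ?S"
    using vec.subspace_sums[OF l(1,3)] subspace_subset_sums[OF l(1,3)] by auto
  have "vec.dim ?S \<le> 3"
    using vec.dim_subset_UNIV[of ?S] by (simp add: vec.dimension_def card_cart_basis)
  moreover have "vec.dim ?S \<ge> 2" using vec.dim_subset[OF S(2)] l by simp
  moreover have "vec.dim ?S \<noteq> 2"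
    using vec.subspace_dim_equal[OF l(1) S(1,2)] vec.subspace_dim_equal[OF l(3) S(1,3)] l assms(3)
    by auto
  ultimately have "vec.dim (l \<inter> l') = 1" using vec.dim_sums_Int[OF l(1,3)] l by simp
  then show ?thesis unfolding pg_points_def using vec.subspace_inter l by blast
qed

lemma pg_meet_unique:
  assumes "l \<in> pg_lines" "l' \<in> pg_lines" "l \<noteq> l'" "p \<in> pg_points" "p \<subseteq> l" "p \<subseteq> l'"
  shows "p = l \<inter> l'"
  using pg_points_subset_eq[OF assms(4) pg_meet_in_pg_points[OF assms(1-3)]] assms(5,6) by blast

lemma vec3_eq_iff: "(v :: 'a ^ 3) = w \<longleftrightarrow> v$1 = w$1 \<and> v$2 = w$2 \<and> v$3 = w$3"
  by (simp add: vec_eq_iff forall_3)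

section \<open>Affine coordinates\<close>

text \<open>The point \<open>(x, y)\<close> of the affine plane is \<open>\<langle>(x, y, 1)\<rangle>\<close>; the
  horizontal line \<open>Y = y\<close> and the vertical line \<open>X = x\<close> pass through the points at infinity
  \<open>hinf = \<langle>(1, 0, 0)\<rangle>\<close> and \<open>vinf = \<langle>(0, 1, 0)\<rangle>\<close> respectively.\<close>

definition hinf :: "('a::field ^ 3) set" where "hinf = vec.span {vector [1, 0, 0]}"
definition vinf :: "('a::field ^ 3) set" where "vinf = vec.span {vector [0, 1, 0]}"
definition line_inf :: "('a::field ^ 3) set" where
  "line_inf = vec.span {vector [1, 0, 0], vector [0, 1, 0]}"
definition hline :: "'a::field \<Rightarrow> ('a ^ 3) set" where
  "hline y = vec.span {vector [1, 0, 0], vector [0, y, 1]}"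
definition vline :: "'a::field \<Rightarrow> ('a ^ 3) set" where
  "vline x = vec.span {vector [0, 1, 0], vector [x, 0, 1]}"
definition aff_pt :: "'a::field \<Rightarrow> 'a \<Rightarrow> ('a ^ 3) set" where
  "aff_pt x y = vec.span {vector [x, y, 1]}"

lemma mem_line_inf: "(v :: 'a::field ^ 3) \<in> line_inf \<longleftrightarrow> v$3 = 0"
proof -
  have "v$3 = 0 \<Longrightarrow> v = v$1 *s vector [1, 0, 0] + v$2 *s vector [0, 1, 0]"
    by (simp add: vec3_eq_iff)
  then show ?thesis unfolding line_inf_def mem_span_pair by auto
qed

lemma mem_hline: "(v :: 'a::field ^ 3) \<in> hline y \<longleftrightarrow> v$2 = y * v$3"
proof -
  have "v$2 = y * v$3 \<Longrightarrow> v = v$1 *s vector [1, 0, 0] + v$3 *s vector [0, y, 1]"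
    by (simp add: vec3_eq_iff mult.commute)
  then show ?thesis unfolding hline_def mem_span_pair by (auto simp: mult.commute)
qed

lemma mem_vline: "(v :: 'a::field ^ 3) \<in> vline x \<longleftrightarrow> v$1 = x * v$3"
proof -
  have "v$1 = x * v$3 \<Longrightarrow> v = v$2 *s vector [0, 1, 0] + v$3 *s vector [x, 0, 1]"
    by (simp add: vec3_eq_iff mult.commute)
  then show ?thesis unfolding vline_def mem_span_pair by (auto simp: mult.commute)
qed

lemma coordinate_lines_in_pg_lines [simp]:
  "line_inf \<in> pg_lines" "hline y \<in> pg_lines" "vline x \<in> pg_lines"
  unfolding line_inf_def hline_def vline_def
  by (rule span_pair_in_pg_lines; auto simp: vec3_eq_iff)+

lemma coordinate_points_in_pg_points [simp]:
  "hinf \<in> pg_points" "vinf \<in> pg_points" "aff_pt x y \<in> pg_points"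
  unfolding hinf_def vinf_def aff_pt_def
  by (rule span_singleton_in_pg_points; simp add: vec3_eq_iff)+

lemma coordinate_lines_subspace:
  "vec.subspace line_inf" "vec.subspace (hline y)" "vec.subspace (vline x)"
  using pg_lines_subspace coordinate_lines_in_pg_lines by blast+

lemma coordinate_incidences [simp]:
  "hinf \<subseteq> line_inf" "hinf \<subseteq> hline y" "\<not> hinf \<subseteq> vline x"
  "vinf \<subseteq> line_inf" "\<not> vinf \<subseteq> hline y" "vinf \<subseteq> vline x"
  "aff_pt x y \<subseteq> hline y' \<longleftrightarrow> y = y'" "aff_pt x y \<subseteq> vline x' \<longleftrightarrow> x = x'"
  "\<not> aff_pt x y \<subseteq> line_inf"
  unfolding hinf_def vinf_def aff_pt_def
  by (simp_all add: coordinate_lines_subspace span_singleton_subset_iff mem_hline mem_vline mem_line_inf)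

lemma coordinate_eq_iff [simp]:
  "aff_pt x y = aff_pt x' y' \<longleftrightarrow> x = x' \<and> y = y'"
  "hline y = hline y' \<longleftrightarrow> y = y'" "vline x = vline x' \<longleftrightarrow> x = x'"
  by (metis coordinate_incidences(7,8) order_refl)+

lemma coordinate_distinct [simp]:
  "hinf \<noteq> vinf" "vinf \<noteq> hinf"
  "aff_pt x y \<noteq> hinf" "hinf \<noteq> aff_pt x y" "aff_pt x y \<noteq> vinf" "vinf \<noteq> aff_pt x y"
  "hline y \<noteq> line_inf" "line_inf \<noteq> hline y" "vline x \<noteq> line_inf" "line_inf \<noteq> vline x"
  "hline y \<noteq> vline x"
  by (metis coordinate_incidences(1-5,7-9) order_refl)+

lemma pg_point_off_line_inf:
  assumes "p \<in> pg_points" "\<not> p \<subseteq> line_inf"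
  obtains x y where "p = aff_pt x y"
proof -
  obtain v where v: "v \<noteq> 0" "p = vec.span {v}" using pg_pointE[OF assms(1)] .
  have v3: "v$3 \<noteq> 0"
    using assms(2) v span_singleton_subset_iff pg_lines_subspace mem_line_inf
    by (metis coordinate_lines_in_pg_lines(1))
  have "vector [v$1 / v$3, v$2 / v$3, 1] = (1 / v$3) *s v"
    using v3 by (simp add: vec3_eq_iff)
  then have "aff_pt (v$1 / v$3) (v$2 / v$3) \<subseteq> p"
    unfolding aff_pt_def v(2)
    by (simp add: span_singleton_subset_iff vec.subspace_span vec.span_scale vec.span_base)
  then show ?thesis
    using that pg_points_subset_eq assms(1) coordinate_points_in_pg_points(3) by metis
qed

lemma points_on_hline:
  assumes "p \<in> pg_points" "p \<subseteq> hline y"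
  shows "p = hinf \<or> (\<exists>x. p = aff_pt x y)"
proof (cases "p \<subseteq> line_inf")
  case True
  have "p = line_inf \<inter> hline y" by (rule pg_meet_unique) (simp_all add: assms True)
  moreover have "hinf = line_inf \<inter> hline y" by (rule pg_meet_unique) simp_all
  ultimately show ?thesis by simp
next
  case False
  then show ?thesis using pg_point_off_line_inf assms by (metis coordinate_incidences(7))
qed

lemma points_on_vline:
  assumes "p \<in> pg_points" "p \<subseteq> vline x"
  shows "p = vinf \<or> (\<exists>y. p = aff_pt x y)"
proof (cases "p \<subseteq> line_inf")
  case True
  have "p = line_inf \<inter> vline x" by (rule pg_meet_unique) (simp_all add: assms True)
  moreover have "vinf = line_inf \<inter> vline x" by (rule pg_meet_unique) simp_all
  ultimately show ?thesis by simp
next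
  case False
  then show ?thesis using pg_point_off_line_inf assms by (metis coordinate_incidences(8))
qed

lemma lines_through_hinf:
  assumes "l \<in> pg_lines" "hinf \<subseteq> l"
  shows "l = line_inf \<or> (\<exists>y. l = hline y)"
proof -
  obtain p where p: "p \<in> pg_points" "p \<subseteq> l" "p \<noteq> hinf"
    using pg_line_two_points[OF assms(1)] by metis
  show ?thesis
  proof (cases "p \<subseteq> line_inf")
    case True
    have "l = line_inf" by (rule pg_join_unique[of hinf p]) (use assms p True in simp_all)
    then show ?thesis ..
  next
    case False
    then obtain x y where xy: "p = aff_pt x y" using pg_point_off_line_inf p(1) by blast
    have "l = hline y" by (rule pg_join_unique[of hinf p]) (use assms p xy in simp_all)
    then show ?thesis by blast
  qed
qed

lemma pg_point_on_line:
  assumes "p \<in> pg_points"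
  shows "\<exists>l\<in>pg_lines. p \<subseteq> l"
proof (cases "p = hinf")
  case True
  then show ?thesis using coordinate_lines_in_pg_lines(1) coordinate_incidences(1) by blast
next
  case False
  then show ?thesis using pg_join_exists[OF assms coordinate_points_in_pg_points(1)] by blast
qed

section \<open>Collineations\<close>

definition collineation :: "(('a::field ^ 3) set \<Rightarrow> ('a ^ 3) set) \<Rightarrow> bool" where
  "collineation \<sigma> \<longleftrightarrow> bij_betw \<sigma> pg_points pg_points \<and> bij_betw \<sigma> pg_lines pg_lines \<and>
     (\<forall>p\<in>pg_points. \<forall>l\<in>pg_lines. \<sigma> p \<subseteq> \<sigma> l \<longleftrightarrow> p \<subseteq> l)"

lemma collineation_point: "collineation \<sigma> \<Longrightarrow> p \<in> pg_points \<Longrightarrow> \<sigma> p \<in> pg_points"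
  and collineation_line: "collineation \<sigma> \<Longrightarrow> l \<in> pg_lines \<Longrightarrow> \<sigma> l \<in> pg_lines"
  and collineation_incidence:
    "collineation \<sigma> \<Longrightarrow> p \<in> pg_points \<Longrightarrow> l \<in> pg_lines \<Longrightarrow> \<sigma> p \<subseteq> \<sigma> l \<longleftrightarrow> p \<subseteq> l"
  unfolding collineation_def bij_betw_def by auto

lemma collineation_point_eq_iff:
  "collineation \<sigma> \<Longrightarrow> p \<in> pg_points \<Longrightarrow> p' \<in> pg_points \<Longrightarrow> \<sigma> p = \<sigma> p' \<longleftrightarrow> p = p'"
  and collineation_line_eq_iff:
  "collineation \<sigma> \<Longrightarrow> l \<in> pg_lines \<Longrightarrow> l' \<in> pg_lines \<Longrightarrow> \<sigma> l = \<sigma> l' \<longleftrightarrow> l = l'"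
  unfolding collineation_def bij_betw_def by (auto dest: inj_onD)

lemma collineation_fixes_join:
  assumes "collineation \<sigma>" "l \<in> pg_lines" "p \<in> pg_points" "p' \<in> pg_points" "p \<noteq> p'"
    and "p \<subseteq> l" "p' \<subseteq> l" "\<sigma> p = p" "\<sigma> p' = p'"
  shows "\<sigma> l = l"
proof -
  have "\<sigma> p \<subseteq> \<sigma> l" "\<sigma> p' \<subseteq> \<sigma> l"
    using collineation_incidence[OF assms(1,3,2)] collineation_incidence[OF assms(1,4,2)] assms(6,7)
    by blast+
  then have "p \<subseteq> \<sigma> l" "p' \<subseteq> \<sigma> l" using assms(8,9) by simp_all
  then show ?thesis
    using pg_join_unique[OF assms(3-5) collineation_line[OF assms(1,2)] assms(2)] assms(6,7) by blast
qed

lemma collineation_fixes_meet: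
  assumes "collineation \<sigma>" "p \<in> pg_points" "l \<in> pg_lines" "l' \<in> pg_lines" "l \<noteq> l'"
    and "p \<subseteq> l" "p \<subseteq> l'" "\<sigma> l = l" "\<sigma> l' = l'"
  shows "\<sigma> p = p"
proof -
  have "\<sigma> p \<subseteq> \<sigma> l" "\<sigma> p \<subseteq> \<sigma> l'"
    using collineation_incidence[OF assms(1,2,3)] collineation_incidence[OF assms(1,2,4)] assms(6,7)
    by blast+
  then have "\<sigma> p \<subseteq> l" "\<sigma> p \<subseteq> l'" using assms(8,9) by simp_all
  then have "\<sigma> p = l \<inter> l'" by (rule pg_meet_unique[OF assms(3-5) collineation_point[OF assms(1,2)]])
  moreover have "p = l \<inter> l'" by (rule pg_meet_unique[OF assms(3-5) assms(2,6,7)])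
  ultimately show ?thesis by simp
qed

lemma collineation_card_points_on_line:
  assumes "collineation \<sigma>" "l \<in> pg_lines" "\<And>p. p \<in> pg_points \<Longrightarrow> \<sigma> p \<in> Q \<longleftrightarrow> p \<in> Q"
  shows "card {p \<in> pg_points. p \<subseteq> \<sigma> l \<and> p \<in> Q} = card {p \<in> pg_points. p \<subseteq> l \<and> p \<in> Q}"
proof -
  have bij: "bij_betw \<sigma> pg_points pg_points" using assms(1) unfolding collineation_def by blast
  have on_image: "\<sigma> p \<subseteq> \<sigma> l \<and> \<sigma> p \<in> Q \<longleftrightarrow> p \<subseteq> l \<and> p \<in> Q" if "p \<in> pg_points" for p
    using collineation_incidence[OF assms(1) that assms(2)] assms(3)[OF that] by blast
  have "bij_betw \<sigma> {p \<in> pg_points. p \<subseteq> l \<and> p \<in> Q} {p \<in> pg_points. p \<subseteq> \<sigma> l \<and> p \<in> Q}"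
    using bij_betw_Collect[where P = "\<lambda>p. p \<subseteq> l \<and> p \<in> Q" and Q = "\<lambda>p. p \<subseteq> \<sigma> l \<and> p \<in> Q",
        OF bij on_image] .
  then show ?thesis by (simp add: bij_betw_same_card)
qed

lemma collineation_linear_involution:
  fixes f :: "'a::field ^ 3 \<Rightarrow> 'a ^ 3"
  assumes lin: "Vector_Spaces.linear (*s) (*s) f" and invol: "\<And>v. f (f v) = v"
  shows "collineation ((`) f)"
proof -
  have inj: "inj f" by (metis invol injI)
  have image: "vec.subspace (f ` S) \<and> vec.dim (f ` S) = vec.dim S" if "vec.subspace S" for S
    using vec.linear_subspace_image[OF lin that] vec.dim_image_eq[OF lin inj_on_subset[OF inj]]
    by simp
  have pts: "f ` S \<in> pg_points" if "S \<in> pg_points" for S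
    using that image unfolding pg_points_def by auto
  have lns: "f ` S \<in> pg_lines" if "S \<in> pg_lines" for S
    using that image unfolding pg_lines_def by auto
  have image_image_id: "f ` f ` S = S" for S by (simp add: image_image invol)
  have "bij_betw ((`) f) pg_points pg_points" "bij_betw ((`) f) pg_lines pg_lines"
    by (auto intro!: bij_betwI[where g = "(`) f"] simp: pts lns image_image_id invol)
  then show ?thesis
    unfolding collineation_def by (simp add: inj_image_subset_iff[OF inj])
qed

lemma levi_adj_iff:
  assumes "p \<in> pg_points" "l \<in> pg_lines"
  shows "levi_adj p l \<longleftrightarrow> p \<subseteq> l" "levi_adj l p \<longleftrightarrow> p \<subseteq> l"
  using assms pg_point_not_line unfolding levi_adj_def by blast+

lemma levi_aut_of_collineation:
  assumes "collineation \<sigma>"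
  shows "graph_aut levi_vertices levi_adj \<sigma>"
proof -
  have "bij_betw \<sigma> (pg_points \<union> pg_lines) (pg_points \<union> pg_lines)"
    by (rule bij_betw_combine) (use assms pg_point_not_line in \<open>auto simp: collineation_def\<close>)
  moreover have type: "\<sigma> w \<in> pg_points \<longleftrightarrow> w \<in> pg_points" "\<sigma> w \<in> pg_lines \<longleftrightarrow> w \<in> pg_lines"
    if "w \<in> levi_vertices" for w
    using that pg_point_not_line collineation_point[OF assms] collineation_line[OF assms]
    unfolding levi_vertices_def by blast+
  moreover have "levi_adj u v \<longleftrightarrow> levi_adj (\<sigma> u) (\<sigma> v)"
    if uv: "u \<in> levi_vertices" "v \<in> levi_vertices" for u v
  proof -
    consider "u \<in> pg_points" "v \<in> pg_lines" | "v \<in> pg_points" "u \<in> pg_lines"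
      | "u \<in> pg_points \<longleftrightarrow> v \<in> pg_points"
      using uv unfolding levi_vertices_def by blast
    then show ?thesis
    proof cases
      case 1
      then show ?thesis
        using levi_adj_iff(1) collineation_point collineation_line collineation_incidence assms by metis
    next
      case 2
      then show ?thesis
        using levi_adj_iff(2) collineation_point collineation_line collineation_incidence assms by metis
    next
      case 3
      then show ?thesis
        using type[OF uv(1)] type[OF uv(2)] pg_point_not_line unfolding levi_adj_def by blast
    qed
  qed
  ultimately show ?thesis unfolding graph_aut_def levi_vertices_def by blast
qed

lemma collineation_of_levi_aut:
  assumes aut: "graph_aut levi_vertices levi_adj \<sigma>"
    and pts: "\<And>p. p \<in> pg_points \<Longrightarrow> \<sigma> p \<in> pg_points"
  shows "collineation \<sigma>"
proof -
  have bij: "bij_betw \<sigma> levi_vertices levi_vertices"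
    and adj: "\<And>u v. u \<in> levi_vertices \<Longrightarrow> v \<in> levi_vertices \<Longrightarrow> levi_adj u v \<longleftrightarrow> levi_adj (\<sigma> u) (\<sigma> v)"
    using aut unfolding graph_aut_def by auto
  have vertices: "p \<in> pg_points \<Longrightarrow> p \<in> levi_vertices" "l \<in> pg_lines \<Longrightarrow> l \<in> levi_vertices" for p l
    unfolding levi_vertices_def by simp_all
  have lns: "\<sigma> l \<in> pg_lines" if l: "l \<in> pg_lines" for l
  proof -
    obtain p where p: "p \<in> pg_points" "p \<subseteq> l" using pg_line_two_points[OF l] by metis
    have "levi_adj p l" using levi_adj_iff(1)[OF p(1) l] p(2) by simp
    then have "levi_adj (\<sigma> p) (\<sigma> l)" using adj[OF vertices(1)[OF p(1)] vertices(2)[OF l]] by simp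
    then show ?thesis using pts[OF p(1)] pg_point_not_line unfolding levi_adj_def by blast
  qed
  have incidence: "\<sigma> p \<subseteq> \<sigma> l \<longleftrightarrow> p \<subseteq> l" if pl: "p \<in> pg_points" "l \<in> pg_lines" for p l
    using adj[OF vertices(1)[OF pl(1)] vertices(2)[OF pl(2)]]
    unfolding levi_adj_iff(1)[OF pl] levi_adj_iff(1)[OF pts[OF pl(1)] lns[OF pl(2)]] ..
  have onto: "x \<in> \<sigma> ` pg_points" if x: "x \<in> pg_points" for x
  proof -
    obtain v where v: "v \<in> levi_vertices" "x = \<sigma> v"
      using bij vertices(1)[OF x] unfolding bij_betw_def by blast
    then have "v \<notin> pg_lines" using lns x pg_point_not_line by blast
    then show ?thesis using v unfolding levi_vertices_def by blast
  qed
  have onto_lines: "x \<in> \<sigma> ` pg_lines" if x: "x \<in> pg_lines" for x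
  proof -
    obtain v where v: "v \<in> levi_vertices" "x = \<sigma> v"
      using bij vertices(2)[OF x] unfolding bij_betw_def by blast
    then have "v \<notin> pg_points" using pts x pg_point_not_line by blast
    then show ?thesis using v unfolding levi_vertices_def by blast
  qed
  have "inj_on \<sigma> levi_vertices" using bij unfolding bij_betw_def by simp
  then have "inj_on \<sigma> pg_points" "inj_on \<sigma> pg_lines"
    by (auto intro: inj_on_subset simp: levi_vertices_def)
  moreover have "\<sigma> ` pg_points = pg_points" using pts onto by auto
  moreover have "\<sigma> ` pg_lines = pg_lines" using lns onto_lines by auto
  ultimately show ?thesis unfolding collineation_def bij_betw_def using incidence by simp
qed

lemma color_classes_preserved_iff:
  assumes "bij_betw \<sigma> V V"
  shows "(\<forall>i. \<sigma> ` {v \<in> V. c v = i} = {v \<in> V. c v = i}) \<longleftrightarrow> (\<forall>v\<in>V. c (\<sigma> v) = c v)"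
proof
  assume "\<forall>i. \<sigma> ` {v \<in> V. c v = i} = {v \<in> V. c v = i}"
  then show "\<forall>v\<in>V. c (\<sigma> v) = c v" by blast
next
  assume col: "\<forall>v\<in>V. c (\<sigma> v) = c v"
  show "\<forall>i. \<sigma> ` {v \<in> V. c v = i} = {v \<in> V. c v = i}"
  proof (intro allI equalityI)
    fix i
    show "\<sigma> ` {v \<in> V. c v = i} \<subseteq> {v \<in> V. c v = i}"
      using col assms bij_betwE by fastforce
    show "{v \<in> V. c v = i} \<subseteq> \<sigma> ` {v \<in> V. c v = i}"
    proof
      fix w assume w: "w \<in> {v \<in> V. c v = i}"
      then obtain v where "v \<in> V" "w = \<sigma> v" using assms bij_betw_imp_surj_on by blast
      then show "w \<in> \<sigma> ` {v \<in> V. c v = i}" using w col by auto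
    qed
  qed
qed

section \<open>Two colours do not suffice\<close>

lemma proper_two_coloring_common_neighbour:
  assumes "c ` V \<subseteq> {..<2}" "proper_coloring V E c"
    and "u \<in> V" "v \<in> V" "w \<in> V" "E u w" "E v w"
  shows "c u = c v"
proof -
  have "c u \<noteq> c w" "c v \<noteq> c w" using assms(2-7) unfolding proper_coloring_def by blast+
  moreover have "c u < 2" "c v < 2" "c w < 2" using assms(1,3-5) by auto
  ultimately show ?thesis by linarith
qed

lemma proper_two_coloring_levi_constant:
  fixes c :: "('a::field ^ 3) set \<Rightarrow> nat"
  assumes colors: "c ` levi_vertices \<subseteq> {..<2}" and proper: "proper_coloring levi_vertices levi_adj c"
  shows "p \<in> pg_points \<Longrightarrow> p' \<in> pg_points \<Longrightarrow> c p = c p'"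
    and "l \<in> pg_lines \<Longrightarrow> l' \<in> pg_lines \<Longrightarrow> c l = c l'"
proof -
  note common = proper_two_coloring_common_neighbour[OF colors proper]
  have vertices: "p \<in> pg_points \<Longrightarrow> p \<in> levi_vertices" "l \<in> pg_lines \<Longrightarrow> l \<in> levi_vertices" for p l
    unfolding levi_vertices_def by simp_all
  show "c p = c p'" if p: "p \<in> pg_points" "p' \<in> pg_points" for p p'
  proof (cases "p = p'")
    case False
    then obtain l where "l \<in> pg_lines" "p \<subseteq> l" "p' \<subseteq> l" using pg_join_exists p by blast
    then show ?thesis using common vertices p levi_adj_iff(1) by metis
  qed simp
  show "c l = c l'" if l: "l \<in> pg_lines" "l' \<in> pg_lines" for l l'
  proof (cases "l = l'")
    case False
    then have "l \<inter> l' \<in> pg_points" using pg_meet_in_pg_points l by blast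
    then show ?thesis using common vertices l levi_adj_iff(2) by (metis inf_le1 inf_le2)
  qed simp
qed

definition swap_xy :: "'a::field ^ 3 \<Rightarrow> 'a ^ 3" where
  "swap_xy v = vector [v$2, v$1, v$3]"

lemma linear_swap_xy: "Vector_Spaces.linear (*s) (*s) (swap_xy :: 'a::field ^ 3 \<Rightarrow> 'a ^ 3)"
  unfolding Vector_Spaces.linear_iff using vec.vector_space_axioms
  by (auto simp: swap_xy_def vec3_eq_iff)

lemma collineation_swap_xy: "collineation ((`) swap_xy)"
  by (rule collineation_linear_involution[OF linear_swap_xy]) (simp add: swap_xy_def vec3_eq_iff)

lemma swap_xy_hinf: "swap_xy ` hinf = vinf"
proof -
  have "swap_xy (vector [1, 0, 0]) = (vector [0, 1, 0] :: 'a::field ^ 3)"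
    by (simp add: swap_xy_def)
  then show ?thesis
    unfolding hinf_def vinf_def using vec.linear_span_image[OF linear_swap_xy]
    by (metis image_empty image_insert)
qed

lemma levi_two_colorings_not_distinguishing:
  fixes c :: "('a::field ^ 3) set \<Rightarrow> nat"
  assumes colors: "c ` levi_vertices \<subseteq> {..<2}" and proper: "proper_coloring levi_vertices levi_adj c"
  shows "\<not> distinguishing levi_vertices levi_adj c"
proof
  assume distinguishing: "distinguishing levi_vertices levi_adj c"
  let ?\<sigma> = "(`) swap_xy :: ('a ^ 3) set \<Rightarrow> ('a ^ 3) set"
  have aut: "graph_aut levi_vertices levi_adj ?\<sigma>"
    by (rule levi_aut_of_collineation[OF collineation_swap_xy])
  have bij: "bij_betw ?\<sigma> levi_vertices levi_vertices" using aut unfolding graph_aut_def by blast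
  have colors_kept: "c (?\<sigma> v) = c v" if "v \<in> levi_vertices" for v
  proof (cases "v \<in> pg_points")
    case True
    then show ?thesis
      by (intro proper_two_coloring_levi_constant(1)[OF colors proper]
          collineation_point[OF collineation_swap_xy])
  next
    case False
    then have "v \<in> pg_lines" using that unfolding levi_vertices_def by blast
    then show ?thesis
      by (intro proper_two_coloring_levi_constant(2)[OF colors proper]
          collineation_line[OF collineation_swap_xy])
  qed
  have "\<forall>i. ?\<sigma> ` {v \<in> levi_vertices. c v = i} = {v \<in> levi_vertices. c v = i}"
    using color_classes_preserved_iff[OF bij, of c] colors_kept by blast
  then have "\<forall>v\<in>levi_vertices. ?\<sigma> v = v"
    using distinguishing[unfolded distinguishing_def, rule_format, of ?\<sigma>] aut by blast
  then have "?\<sigma> hinf = hinf" unfolding levi_vertices_def by simp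
  then show False using swap_xy_hinf coordinate_distinct(1) by metis
qed

section \<open>Three colours suffice\<close>

text \<open>The rows \<open>1 \<le> k < q\<close> of the pattern have pairwise distinct sizes, and rows 1 to 4
  single out the columns 0 and 1.\<close>
definition pattern :: "nat \<Rightarrow> nat \<Rightarrow> bool" where
  "pattern k j \<longleftrightarrow> (if k = 1 then j = 0 else if k = 2 then j \<noteq> 0 else if k = 3 then j \<le> 1
      else if k = 4 then 2 \<le> j else 5 \<le> k \<and> j + 2 < k)"

definition pattern_row_size :: "nat \<Rightarrow> nat \<Rightarrow> nat" where
  "pattern_row_size q k =
    (if k = 1 then 1 else if k = 2 then q - 1 else if k = 3 then 2 else if k = 4 then q - 2 else k - 2)"

lemma card_pattern_row:
  assumes "1 \<le> k" "k < q" "5 \<le> q"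
  shows "card {j. j < q \<and> pattern k j} = pattern_row_size q k"
proof -
  consider "k = 1" | "k = 2" | "k = 3" | "k = 4" | "5 \<le> k" using assms by linarith
  then show ?thesis
  proof cases
    case 1
    then have "{j. j < q \<and> pattern k j} = {0}" using assms by (auto simp: pattern_def)
    then show ?thesis using 1 by (simp add: pattern_row_size_def)
  next
    case 2
    then have "{j. j < q \<and> pattern k j} = {1..<q}" using assms by (auto simp: pattern_def)
    then show ?thesis using 2 by (simp add: pattern_row_size_def)
  next
    case 3
    then have "{j. j < q \<and> pattern k j} = {0, 1}" using assms by (auto simp: pattern_def)
    then show ?thesis using 3 by (simp add: pattern_row_size_def)
  next
    case 4
    then have "{j. j < q \<and> pattern k j} = {2..<q}" using assms by (auto simp: pattern_def)
    then show ?thesis using 4 by (simp add: pattern_row_size_def)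
  next
    case 5
    then have "{j. j < q \<and> pattern k j} = {..<k - 2}" using assms by (auto simp: pattern_def)
    then show ?thesis using 5 by (simp add: pattern_row_size_def)
  qed
qed

lemma pattern_row_size_inj:
  assumes "1 \<le> k" "k < q" "1 \<le> k'" "k' < q" "5 \<le> q" "pattern_row_size q k = pattern_row_size q k'"
  shows "k = k'"
proof -
  have shape: "(x = 1 \<and> f x = 1) \<or> (x = 2 \<and> f x = q - 1) \<or> (x = 3 \<and> f x = 2)
      \<or> (x = 4 \<and> f x = q - 2) \<or> (5 \<le> x \<and> f x = x - 2)" if "1 \<le> x" "f = pattern_row_size q" for x f
    using that unfolding pattern_row_size_def by auto
  from shape[OF assms(1) refl] shape[OF assms(3) refl] assms(2,4-6) show ?thesis
    by (elim disjE conjE) linarith+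
qed

locale field_indexing =
  fixes ix :: "'a::{finite,field} \<Rightarrow> nat"
  assumes bij_ix: "bij_betw ix UNIV {..<CARD('a)}" and card_ge_5: "5 \<le> CARD('a)"
begin

declare One_nat_def [simp del] \<comment> \<open>keeps \<open>elem 1\<close> from turning into \<open>elem (Suc 0)\<close>\<close>

definition elem :: "nat \<Rightarrow> 'a" where "elem k = inv_into UNIV ix k"

definition marked_points :: "('a ^ 3) set set" where
  "marked_points = {aff_pt x y |x y. pattern (ix y) (ix x)}"

definition marked_lines :: "('a ^ 3) set set" where
  "marked_lines = {line_inf, hline (elem 0)}"

definition marked_coloring :: "('a ^ 3) set \<Rightarrow> nat" where
  "marked_coloring v = (if v \<in> pg_points then if v \<in> marked_points then 2 else 0
      else if v \<in> marked_lines then 2 else 1)"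

lemma ix_eq_iff: "ix a = ix b \<longleftrightarrow> a = b"
  using bij_ix unfolding bij_betw_def inj_def by blast

lemma ix_less: "ix a < CARD('a)"
  using bij_ix bij_betwE by blast

lemma ix_elem: "k < CARD('a) \<Longrightarrow> ix (elem k) = k"
  unfolding elem_def using bij_ix by (simp add: bij_betw_inv_into_right)

lemma ix_eq_iff_elem: "k < CARD('a) \<Longrightarrow> ix a = k \<longleftrightarrow> a = elem k"
  using ix_elem ix_eq_iff by metis

lemma elem_eq_iff: "j < CARD('a) \<Longrightarrow> k < CARD('a) \<Longrightarrow> elem j = elem k \<longleftrightarrow> j = k"
  using ix_elem by metis

lemma elem_eq_iff_small [simp]: "j < 5 \<Longrightarrow> k < 5 \<Longrightarrow> elem j = elem k \<longleftrightarrow> j = k"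
  using elem_eq_iff card_ge_5 by simp

lemma ix_elem_small [simp]:
  "ix (elem 0) = 0" "ix (elem 1) = 1" "ix (elem 2) = 2" "ix (elem 3) = 3" "ix (elem 4) = 4"
  using ix_elem card_ge_5 by simp_all

lemma aff_pt_marked_iff [simp]: "aff_pt x y \<in> marked_points \<longleftrightarrow> pattern (ix y) (ix x)"
  unfolding marked_points_def by auto

lemma marked_point_not_on_marked_line:
  assumes "p \<in> marked_points" "l \<in> marked_lines"
  shows "\<not> p \<subseteq> l"
proof -
  obtain x y where "p = aff_pt x y" "pattern (ix y) (ix x)"
    using assms(1) unfolding marked_points_def by blast
  then show ?thesis
    using assms(2) unfolding marked_lines_def by (auto simp: pattern_def)
qed

lemma card_marked_points_on_hline:
  "card {p \<in> pg_points. p \<subseteq> hline y \<and> p \<in> marked_points} = card {j. j < CARD('a) \<and> pattern (ix y) j}"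
proof -
  let ?X = "{x. pattern (ix y) (ix x)}"
  have "{p \<in> pg_points. p \<subseteq> hline y \<and> p \<in> marked_points} = (\<lambda>x. aff_pt x y) ` ?X"
  proof (intro equalityI subsetI)
    fix p assume "p \<in> {p \<in> pg_points. p \<subseteq> hline y \<and> p \<in> marked_points}"
    then show "p \<in> (\<lambda>x. aff_pt x y) ` ?X" unfolding marked_points_def by auto
  next
    fix p assume "p \<in> (\<lambda>x. aff_pt x y) ` ?X"
    then obtain x where "p = aff_pt x y" "x \<in> ?X" by blast
    then show "p \<in> {p \<in> pg_points. p \<subseteq> hline y \<and> p \<in> marked_points}" by simp
  qed
  moreover have "inj_on (\<lambda>x. aff_pt x y) ?X" by (rule inj_onI) simp
  moreover have "bij_betw ix ?X {j \<in> {..<CARD('a)}. pattern (ix y) j}"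
    using bij_betw_Collect[OF bij_ix, of "pattern (ix y)" "\<lambda>x. pattern (ix y) (ix x)"] by simp
  ultimately show ?thesis by (simp add: card_image bij_betw_same_card)
qed

lemma marked_coloring_proper: "proper_coloring levi_vertices levi_adj marked_coloring"
  unfolding proper_coloring_def levi_adj_def marked_coloring_def
  using marked_point_not_on_marked_line pg_point_not_line by auto

lemma marked_coloring_aut_point:
  assumes aut: "graph_aut levi_vertices levi_adj \<sigma>"
    and colors_kept: "\<And>v. v \<in> levi_vertices \<Longrightarrow> marked_coloring (\<sigma> v) = marked_coloring v"
    and p: "p \<in> pg_points"
  shows "\<sigma> p \<in> pg_points"
proof (cases "p \<in> marked_points")
  case False
  then show ?thesis
    using colors_kept[of p] p unfolding levi_vertices_def marked_coloring_def by (auto split: if_splits)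
next
  case True
  text \<open>Colour 2 does not tell points from lines, but an unmarked line through \<open>p\<close> does.\<close>
  obtain l where l: "l \<in> pg_lines" "p \<subseteq> l" using pg_point_on_line[OF p] by blast
  have "l \<notin> marked_lines" using marked_point_not_on_marked_line True l(2) by blast
  then have "marked_coloring (\<sigma> l) = 1"
    using colors_kept[of l] l(1) pg_point_not_line unfolding levi_vertices_def marked_coloring_def
    by auto
  then have "\<sigma> l \<notin> pg_points" unfolding marked_coloring_def by (auto split: if_splits)
  moreover have "levi_adj (\<sigma> p) (\<sigma> l)"
    using aut p l levi_adj_iff(1)[OF p l(1)] unfolding graph_aut_def levi_vertices_def by blast
  ultimately show ?thesis unfolding levi_adj_def by blast
qed

end

locale marked_collineation = field_indexing ix for ix :: "'a::{finite,field} \<Rightarrow> nat" +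
  fixes \<sigma> :: "('a ^ 3) set \<Rightarrow> ('a ^ 3) set"
  assumes collineation: "collineation \<sigma>"
    and marked_points_kept: "p \<in> pg_points \<Longrightarrow> \<sigma> p \<in> marked_points \<longleftrightarrow> p \<in> marked_points"
    and marked_lines_kept: "l \<in> pg_lines \<Longrightarrow> \<sigma> l \<in> marked_lines \<longleftrightarrow> l \<in> marked_lines"
begin

lemmas point = collineation_point[OF collineation]
  and line = collineation_line[OF collineation]
  and incidence = collineation_incidence[OF collineation]
  and point_eq_iff = collineation_point_eq_iff[OF collineation]
  and line_eq_iff = collineation_line_eq_iff[OF collineation]
  and fixes_join = collineation_fixes_join[OF collineation]
  and fixes_meet = collineation_fixes_meet[OF collineation]

lemma fixes_hinf: "\<sigma> hinf = hinf"
proof -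
  have "\<sigma> line_inf \<in> marked_lines" "\<sigma> (hline (elem 0)) \<in> marked_lines"
    using marked_lines_kept unfolding marked_lines_def by simp_all
  moreover have "\<sigma> line_inf \<noteq> \<sigma> (hline (elem 0))" using line_eq_iff by simp
  ultimately have "{\<sigma> line_inf, \<sigma> (hline (elem 0))} = {line_inf, hline (elem 0)}"
    unfolding marked_lines_def by auto
  moreover have "\<sigma> hinf \<subseteq> \<sigma> line_inf" "\<sigma> hinf \<subseteq> \<sigma> (hline (elem 0))" using incidence by simp_all
  ultimately have "\<sigma> hinf \<subseteq> line_inf" "\<sigma> hinf \<subseteq> hline (elem 0)" by (auto simp: doubleton_eq_iff)
  then have "\<sigma> hinf = line_inf \<inter> hline (elem 0)" by (intro pg_meet_unique) (simp_all add: point)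
  moreover have "hinf = line_inf \<inter> hline (elem 0)" by (intro pg_meet_unique) simp_all
  ultimately show ?thesis by simp
qed

lemma fixes_unmarked_hline:
  assumes "ix y \<noteq> 0"
  shows "\<sigma> (hline y) = hline y"
proof -
  have "hinf \<subseteq> \<sigma> (hline y)" using incidence[of hinf "hline y"] fixes_hinf by simp
  then have "\<sigma> (hline y) = line_inf \<or> (\<exists>y'. \<sigma> (hline y) = hline y')"
    by (intro lines_through_hinf line) simp_all
  moreover have "hline y \<notin> marked_lines"
    using assms ix_eq_iff_elem[of 0] card_ge_5 unfolding marked_lines_def by auto
  then have unmarked: "\<sigma> (hline y) \<notin> marked_lines" using marked_lines_kept by simp
  ultimately obtain y' where y': "\<sigma> (hline y) = hline y'" unfolding marked_lines_def by auto
  then have "ix y' \<noteq> 0" using unmarked ix_eq_iff_elem[of 0] card_ge_5 unfolding marked_lines_def by auto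
  moreover have "card {j. j < CARD('a) \<and> pattern (ix y') j} = card {j. j < CARD('a) \<and> pattern (ix y) j}"
    using collineation_card_points_on_line[OF collineation _ marked_points_kept, of "hline y"] y'
    by (simp add: card_marked_points_on_hline)
  ultimately have "ix y' = ix y"
    using pattern_row_size_inj[of "ix y'" "CARD('a)" "ix y"] card_pattern_row ix_less assms card_ge_5
    by simp
  then show ?thesis using y' ix_eq_iff by simp
qed

lemma image_on_fixed_hline:
  assumes "\<sigma> (hline y) = hline y"
  obtains x' where "\<sigma> (aff_pt x y) = aff_pt x' y" "pattern (ix y) (ix x') \<longleftrightarrow> pattern (ix y) (ix x)"
proof -
  have "\<sigma> (aff_pt x y) \<subseteq> hline y" using incidence[of "aff_pt x y" "hline y"] assms by simp
  then have "\<sigma> (aff_pt x y) = hinf \<or> (\<exists>x'. \<sigma> (aff_pt x y) = aff_pt x' y)"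
    by (intro points_on_hline point) simp_all
  moreover have "\<sigma> (aff_pt x y) \<noteq> hinf" using fixes_hinf point_eq_iff[of "aff_pt x y" hinf] by simp
  ultimately obtain x' where x': "\<sigma> (aff_pt x y) = aff_pt x' y" by blast
  then show ?thesis using that marked_points_kept[of "aff_pt x y"] by simp
qed

lemma fixes_aff_pt_by_pattern:
  assumes "\<sigma> (hline y) = hline y"
    and "\<And>x'. (pattern (ix y) (ix x') \<longleftrightarrow> pattern (ix y) (ix x)) \<Longrightarrow> x' = x \<or> \<sigma> (aff_pt x' y) = aff_pt x' y"
  shows "\<sigma> (aff_pt x y) = aff_pt x y"
proof -
  obtain x' where x': "\<sigma> (aff_pt x y) = aff_pt x' y" "pattern (ix y) (ix x') \<longleftrightarrow> pattern (ix y) (ix x)"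
    using image_on_fixed_hline[OF assms(1)] .
  then show ?thesis using assms(2)[OF x'(2)] point_eq_iff[of "aff_pt x y" "aff_pt x' y"] by auto
qed

lemma fixes_aff_pt_on_vline_0:
  assumes "\<sigma> (vline (elem 0)) = vline (elem 0)" "\<sigma> (hline y) = hline y"
  shows "\<sigma> (aff_pt (elem 0) y) = aff_pt (elem 0) y"
  by (rule fixes_meet[of _ "hline y" "vline (elem 0)"]) (simp_all add: assms)

text \<open>Column 0 holds the only marked point of row 1 and the only unmarked point of row 2.\<close>
lemma fixes_vline_0: "\<sigma> (vline (elem 0)) = vline (elem 0)"
proof -
  have "\<sigma> (aff_pt (elem 0) (elem 1)) = aff_pt (elem 0) (elem 1)"
    and "\<sigma> (aff_pt (elem 0) (elem 2)) = aff_pt (elem 0) (elem 2)"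
    by (rule fixes_aff_pt_by_pattern;
        simp add: fixes_unmarked_hline pattern_def ix_eq_iff_elem card_ge_5)+
  then show ?thesis
    by (rule fixes_join[rotated -2]) simp_all
qed

text \<open>Column 1 then holds the other marked point of row 3 and the other unmarked point of
  row 4.\<close>
lemma fixes_vline_1: "\<sigma> (vline (elem 1)) = vline (elem 1)"
proof -
  have col_0: "\<sigma> (aff_pt (elem 0) (elem k)) = aff_pt (elem 0) (elem k)" if "k = 3 \<or> k = 4" for k
    using that fixes_aff_pt_on_vline_0[OF fixes_vline_0] fixes_unmarked_hline by auto
  have col_0_1: "x = elem 0 \<or> x = elem 1" if "ix x < 2" for x
    using that ix_eq_iff_elem[of 0 x] ix_eq_iff_elem[of 1 x] card_ge_5 by auto
  have "\<sigma> (aff_pt (elem 1) (elem k)) = aff_pt (elem 1) (elem k)" if k: "k = 3 \<or> k = 4" for k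
  proof (rule fixes_aff_pt_by_pattern)
    show "\<sigma> (hline (elem k)) = hline (elem k)" using k by (intro fixes_unmarked_hline) auto
    fix x' assume "pattern (ix (elem k)) (ix x') \<longleftrightarrow> pattern (ix (elem k)) (ix (elem 1))"
    then have "ix x' < 2" using k by (auto simp: pattern_def)
    then show "x' = elem 1 \<or> \<sigma> (aff_pt x' (elem k)) = aff_pt x' (elem k)"
      using col_0_1 col_0[OF k] by blast
  qed
  from this[of 3] this[of 4] show ?thesis by (rule fixes_join[rotated -2]) simp_all
qed

lemma fixes_vinf: "\<sigma> vinf = vinf"
  by (rule fixes_meet[of _ "vline (elem 0)" "vline (elem 1)"])
    (simp_all add: fixes_vline_0 fixes_vline_1 ix_eq_iff_elem card_ge_5)

lemma fixes_line_inf: "\<sigma> line_inf = line_inf"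
  by (rule fixes_join[of _ hinf vinf]) (simp_all add: fixes_hinf fixes_vinf)

lemma fixes_hline: "\<sigma> (hline y) = hline y"
proof (cases "ix y = 0")
  case True
  have "\<sigma> (hline y) \<in> marked_lines"
    using marked_lines_kept True ix_eq_iff_elem[of 0] card_ge_5 unfolding marked_lines_def by simp
  moreover have "\<sigma> (hline y) \<noteq> line_inf" using fixes_line_inf line_eq_iff[of "hline y" line_inf] by simp
  ultimately show ?thesis using True ix_eq_iff_elem[of 0] card_ge_5 unfolding marked_lines_def by auto
qed (rule fixes_unmarked_hline)

lemma fixes_points_on_vline_1:
  assumes "p \<in> pg_points" "p \<subseteq> vline (elem 1)"
  shows "\<sigma> p = p"
  using points_on_vline[OF assms] fixes_vinf
    fixes_meet[of "aff_pt (elem 1) _" "hline _" "vline (elem 1)"] fixes_hline fixes_vline_1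
  by auto

text \<open>If \<open>u\<close> is fixed and off the pointwise fixed line \<open>vline (elem 1)\<close>, every line through \<open>u\<close>
  is fixed, being the join of \<open>u\<close> with its meet with that line.\<close>
lemma fixes_point_via_vline_1:
  assumes p: "p \<in> pg_points" and u: "u \<in> pg_points" "p \<noteq> u" "\<sigma> u = u" "\<not> u \<subseteq> vline (elem 1)"
    and l0: "l0 \<in> pg_lines" "p \<subseteq> l0" "\<sigma> l0 = l0" "\<not> u \<subseteq> l0"
  shows "\<sigma> p = p"
proof -
  obtain l where l: "l \<in> pg_lines" "p \<subseteq> l" "u \<subseteq> l" using pg_join_exists[OF p u(1,2)] by blast
  have "l \<noteq> vline (elem 1)" using l(3) u(4) by blast
  then have w: "l \<inter> vline (elem 1) \<in> pg_points"
    using pg_meet_in_pg_points[OF l(1) coordinate_lines_in_pg_lines(3)] by simp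
  have "\<sigma> l = l"
    by (rule fixes_join[OF l(1) w u(1)]) (use l u fixes_points_on_vline_1[OF w] in auto)
  moreover have "l \<noteq> l0" using l(3) l0(4) by blast
  ultimately show ?thesis using fixes_meet[OF p l(1) l0(1) _ l(2) l0(2)] l0(3) by blast
qed

lemma fixes_points:
  assumes p: "p \<in> pg_points"
  shows "\<sigma> p = p"
proof (cases "p \<subseteq> line_inf")
  case True
  show ?thesis
    by (rule fixes_point_via_vline_1[OF p, of "aff_pt (elem 0) (elem 0)" line_inf])
      (use True fixes_aff_pt_on_vline_0[OF fixes_vline_0 fixes_hline] fixes_line_inf in
        \<open>auto simp: ix_eq_iff_elem card_ge_5\<close>)
next
  case False
  then obtain x y where xy: "p = aff_pt x y" using pg_point_off_line_inf p by blast
  define y' where "y' = (if y = elem 0 then elem 1 else elem 0)"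
  have "y' \<noteq> y" using ix_eq_iff_elem[of 0] card_ge_5 unfolding y'_def by auto
  then show ?thesis
    by (intro fixes_point_via_vline_1[OF p, of "aff_pt (elem 0) y'" "hline y"])
      (use xy fixes_aff_pt_on_vline_0[OF fixes_vline_0 fixes_hline] fixes_hline in
        \<open>auto simp: ix_eq_iff_elem card_ge_5\<close>)
qed

lemma fixes_lines:
  assumes l: "l \<in> pg_lines"
  shows "\<sigma> l = l"
proof -
  obtain p p' where "p \<in> pg_points" "p' \<in> pg_points" "p \<noteq> p'" "p \<subseteq> l" "p' \<subseteq> l"
    using pg_line_two_points[OF l] by metis
  then show ?thesis using fixes_join[OF l] fixes_points by blast
qed

end

context field_indexing
begin

lemma marked_coloring_distinguishing: "distinguishing levi_vertices levi_adj marked_coloring"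
  unfolding distinguishing_def
proof (intro allI impI)
  fix \<sigma>
  assume "graph_aut levi_vertices levi_adj \<sigma> \<and>
    (\<forall>i. \<sigma> ` {v \<in> levi_vertices. marked_coloring v = i} = {v \<in> levi_vertices. marked_coloring v = i})"
  then have aut: "graph_aut levi_vertices levi_adj \<sigma>"
    and colors_kept: "\<And>v. v \<in> levi_vertices \<Longrightarrow> marked_coloring (\<sigma> v) = marked_coloring v"
    using color_classes_preserved_iff[of \<sigma> levi_vertices marked_coloring]
    unfolding graph_aut_def by blast+
  have col: "collineation \<sigma>"
    using collineation_of_levi_aut[OF aut marked_coloring_aut_point[OF aut colors_kept]] .
  interpret marked_collineation ix \<sigma>
  proof
    show "collineation \<sigma>" by (rule col)
    show "\<sigma> p \<in> marked_points \<longleftrightarrow> p \<in> marked_points" if "p \<in> pg_points" for p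
      using colors_kept[of p] that collineation_point[OF col that]
      unfolding levi_vertices_def marked_coloring_def by (auto split: if_splits)
    show "\<sigma> l \<in> marked_lines \<longleftrightarrow> l \<in> marked_lines" if "l \<in> pg_lines" for l
      using colors_kept[of l] that collineation_line[OF col that] pg_point_not_line
      unfolding levi_vertices_def marked_coloring_def by (auto split: if_splits)
  qed
  show "\<forall>v\<in>levi_vertices. \<sigma> v = v"
    unfolding levi_vertices_def using fixes_points fixes_lines by blast
qed

end

lemma field_indexing_exists:
  assumes "5 \<le> CARD('a::{finite,field})"
  obtains ix :: "'a::{finite,field} \<Rightarrow> nat" where "field_indexing ix"
proof -
  obtain h where "bij_betw h {0..<CARD('a)} (UNIV :: 'a set)"
    using ex_bij_betw_nat_finite[of "UNIV :: 'a set"] by auto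
  then have "bij_betw (inv_into {..<CARD('a)} h) UNIV {..<CARD('a)}"
    by (simp add: bij_betw_inv_into lessThan_atLeast0)
  then show ?thesis using assms by (intro that) unfold_locales
qed

lemma levi_distinguishing_three_coloring:
  assumes "5 \<le> CARD('a::{finite,field})"
  shows "\<exists>c. c ` (levi_vertices :: ('a ^ 3) set set) \<subseteq> {..<3}
    \<and> proper_coloring levi_vertices levi_adj c \<and> distinguishing levi_vertices levi_adj c"
proof -
  obtain ix :: "'a \<Rightarrow> nat" where "field_indexing ix" using field_indexing_exists assms by blast
  then interpret field_indexing ix .
  have "marked_coloring ` levi_vertices \<subseteq> {..<3}" unfolding marked_coloring_def by auto
  then show ?thesis using marked_coloring_proper marked_coloring_distinguishing by blast
qed

theorem mainTheorem2:
  assumes "\<exists>p k. prime p \<and> k > 0 \<and> CARD('a::{finite,field}) = p ^ k"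
    and "CARD('a) \<ge> 5"
  shows "dist_chromatic_number (levi_vertices :: ('a ^ 3) set set) levi_adj = 3"
  unfolding dist_chromatic_number_def
proof (rule Least_equality)
  show "\<exists>c. c ` (levi_vertices :: ('a ^ 3) set set) \<subseteq> {..<3}
      \<and> proper_coloring levi_vertices levi_adj c \<and> distinguishing levi_vertices levi_adj c"
    using levi_distinguishing_three_coloring assms(2) by blast
next
  fix k
  assume "\<exists>c. c ` (levi_vertices :: ('a ^ 3) set set) \<subseteq> {..<k}
      \<and> proper_coloring levi_vertices levi_adj c \<and> distinguishing levi_vertices levi_adj c"
  then obtain c :: "('a ^ 3) set \<Rightarrow> nat" where c: "c ` levi_vertices \<subseteq> {..<k}"
    "proper_coloring levi_vertices levi_adj c" "distinguishing levi_vertices levi_adj c"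
    by blast
  show "3 \<le> k"
  proof (rule ccontr)
    assume "\<not> 3 \<le> k"
    then have "c ` levi_vertices \<subseteq> {..<2}" using c(1) by auto
    then show False using levi_two_colorings_not_distinguishing c(2,3) by blast
  qed
qed

end
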